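(* Let $\alpha\ge2$. Then there do not exist $\sigma<1/2$ and $C>0$ such that $\|u\|_{L^{\alpha+2}(\Theta)}\le C\|u\|_{H^\sigma_{rad}(\Theta)}$ for all $u\in H^\sigma_{rad}(\Theta)$.
   Context: $\Theta$ is the open unit disc of $\mathbb R^2$; radial functions depend only on $r=|x|$. Let $0<z_1<z_2<\cdots$ be the positive zeros of the Bessel function $J_0$ and $e_n(r)=J_0(z_nr)/\|J_0(z_n|\cdot|)\|_{L^2(\Theta)}$ (orthonormal basis of radial $L^2(\Theta)$ of Dirichlet eigenfunctions of $-\Delta$, eigenvalues $z_n^2$). For $\sigma\ge0$, $H^\sigma_{rad}(\Theta)$ is the space of radial $u=\sum_na_ne_n$ with $\|u\|_{H^\sigma_{rad}(\Theta)}^2=\sum_n z_n^{2\sigma}|a_n|^2<\infty$. *)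

theory Defs
  imports "HOL-Analysis.Analysis"
begin

definition Theta :: "(real^2) set" where
  "Theta = ball 0 1"

definition J0 :: "real \<Rightarrow> real" where
  "J0 x = (\<Sum>k. (-1)^k / (fact k)^2 * (x/2)^(2*k))"

text \<open>Positive zeros of J0 in increasing order, indexed from 0:
  besselz n is the positive zero having exactly n positive zeros below it
  (z_{n+1} in the paper's 1-based indexing).\<close>
definition besselz :: "nat \<Rightarrow> real" where
  "besselz n = (THE x. 0 < x \<and> J0 x = 0 \<and>
      finite {y. 0 < y \<and> y < x \<and> J0 y = 0} \<and>
      card {y. 0 < y \<and> y < x \<and> J0 y = 0} = n)"

text \<open>Normalized radial Dirichlet eigenfunctions, as functions of r = |x|.\<close>
definition eigen :: "nat \<Rightarrow> real \<Rightarrow> real" where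
  "eigen n r = J0 (besselz n * r) /
     sqrt (LINT x:Theta|lborel. (J0 (besselz n * norm x))^2)"

definition radial_on :: "(real^2) set \<Rightarrow> (real^2 \<Rightarrow> complex) \<Rightarrow> bool" where
  "radial_on S u \<longleftrightarrow> (\<forall>x\<in>S. \<forall>y\<in>S. norm x = norm y \<longrightarrow> u x = u y)"

definition L2_rad :: "(real^2 \<Rightarrow> complex) set" where
  "L2_rad = {u. set_borel_measurable lborel Theta u \<and>
                set_integrable lborel Theta (\<lambda>x. (cmod (u x))^2) \<and>
                radial_on Theta u}"

definition coef :: "nat \<Rightarrow> (real^2 \<Rightarrow> complex) \<Rightarrow> complex" where
  "coef n u = (LINT x:Theta|lborel. eigen n (norm x) *\<^sub>R u x)"

definition H_rad :: "real \<Rightarrow> (real^2 \<Rightarrow> complex) set" where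
  "H_rad \<sigma> = {u \<in> L2_rad.
     summable (\<lambda>n. besselz n powr (2*\<sigma>) * (cmod (coef n u))^2)}"

definition H_norm :: "real \<Rightarrow> (real^2 \<Rightarrow> complex) \<Rightarrow> real" where
  "H_norm \<sigma> u = sqrt (\<Sum>n. besselz n powr (2*\<sigma>) * (cmod (coef n u))^2)"

end

(*
  Test the inequality on u_k(x) = (1 - |x|^2)^(k+2), with m = k + 2. In the Dirichlet
  eigenbasis, Green's identity shows that the coefficients of Delta u_k are -z_n^2 times those
  of u_k, so Bessel's inequality for u_k and for Delta u_k, with the spectrum split at z_n^2 = m,
  gives |u_k|_{H^sigma}^2 <= C m^(sigma - 1), while |u_k|_{L^p} ~ m^(-1/p) by direct computation.
  For sigma < 1 - 2/p (in particular sigma < 1/2 and p = alpha + 2 >= 4) the ratio is unbounded.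

  That the eigenbasis is well defined requires the positive zeros of J0 to be simple and to form
  an unbounded discrete sequence: simplicity follows from the monotone energy
  x^2 J0(x)^2 + (x J0'(x))^2, unboundedness from Sturm comparison with sin(x - a) / sqrt x.
*)
theory Submission
  imports Defs
begin

section \<open>The Bessel function \<open>J0\<close> as a power series in \<open>x\<^sup>2/4\<close>\<close>

definition J0_coeff :: "nat \<Rightarrow> real" where
  "J0_coeff k = (-1)^k / (fact k)^2"

text \<open>With \<open>J0 x = besselF (x\<^sup>2/4)\<close>, Bessel's equation of order 0 becomes
  \<open>(t F'(t))' = - F(t)\<close>; \<open>besselG\<close> is the flux \<open>t F'(t)\<close>.\<close>

definition besselF :: "real \<Rightarrow> real" where
  "besselF t = (\<Sum>k. J0_coeff k * t^k)"

definition besselF' :: "real \<Rightarrow> real" where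
  "besselF' t = (\<Sum>k. diffs J0_coeff k * t^k)"

definition besselG :: "real \<Rightarrow> real" where
  "besselG t = (\<Sum>k. (real k * J0_coeff k) * t^k)"

lemma summable_powser_inverse_fact_bound:
  fixes a :: "nat \<Rightarrow> real"
  assumes "\<And>k. \<bar>a k\<bar> \<le> 1 / fact k"
  shows "summable (\<lambda>k. a k * t^k)"
proof (rule summable_norm_cancel, rule summable_comparison_test[OF _ summable_exp[of "\<bar>t\<bar>"]])
  show "\<exists>N. \<forall>n\<ge>N. norm (norm (a n * t ^ n)) \<le> inverse (fact n) * \<bar>t\<bar> ^ n"
    using assms by (auto intro!: exI[of _ 0] mult_right_mono simp: abs_mult power_abs divide_inverse)
qed

lemma abs_J0_coeff_le: "\<bar>J0_coeff k\<bar> \<le> 1 / fact k"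
proof -
  have "(fact k::real) \<le> (fact k)^2" by (simp add: power2_eq_square)
  then show ?thesis by (simp add: J0_coeff_def abs_mult power_abs frac_le)
qed

lemma abs_diffs_J0_coeff_le: "\<bar>diffs J0_coeff k\<bar> \<le> 1 / fact k"
proof -
  have "(fact (Suc k)::real) = real (Suc k) * fact k" by simp
  then have "\<bar>diffs J0_coeff k\<bar> = 1 / (fact k * fact (Suc k))"
    by (simp add: diffs_def J0_coeff_def abs_mult power_abs power2_eq_square field_simps
        del: fact_Suc of_nat_Suc)
  also have "\<dots> \<le> 1 / fact k"
    using fact_ge_1[of "Suc k", where 'a=real] by (intro frac_le) (auto simp: mult_le_cancel_left1)
  finally show ?thesis .
qed

lemma abs_mult_J0_coeff_le: "\<bar>real k * J0_coeff k\<bar> \<le> 1 / fact k"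
proof (cases k)
  case (Suc m)
  have "(fact k::real) = real k * fact m" using Suc by simp
  then have "\<bar>real k * J0_coeff k\<bar> = 1 / (fact m * fact k)"
    using Suc by (simp add: J0_coeff_def abs_mult power_abs power2_eq_square field_simps
        del: fact_Suc of_nat_Suc)
  also have "\<dots> \<le> 1 / fact k" by (simp add: frac_le)
  finally show ?thesis .
qed (simp add: J0_coeff_def)

lemma diffs_mult_J0_coeff: "diffs (\<lambda>k. real k * J0_coeff k) = (\<lambda>k. - J0_coeff k)"
proof
  fix k
  have "(fact (Suc k)::real) = real (Suc k) * fact k" by simp
  then show "diffs (\<lambda>k. real k * J0_coeff k) k = - J0_coeff k"
    unfolding diffs_def J0_coeff_def
    by (simp add: power2_eq_square field_simps del: fact_Suc of_nat_Suc)
qed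

lemma besselF_has_derivative: "(besselF has_real_derivative besselF' t) (at t)"
  unfolding besselF_def besselF'_def
  by (rule termdiffs_strong_converges_everywhere)
    (rule summable_powser_inverse_fact_bound[OF abs_J0_coeff_le])

lemma besselG_has_derivative: "(besselG has_real_derivative - besselF t) (at t)"
proof -
  have "(besselG has_real_derivative (\<Sum>k. diffs (\<lambda>k. real k * J0_coeff k) k * t^k)) (at t)"
    unfolding besselG_def
    by (rule termdiffs_strong_converges_everywhere)
      (rule summable_powser_inverse_fact_bound[OF abs_mult_J0_coeff_le])
  then show ?thesis
    using suminf_minus[OF summable_powser_inverse_fact_bound[OF abs_J0_coeff_le]]
    by (simp add: diffs_mult_J0_coeff besselF_def)
qed

lemma besselG_eq: "besselG t = t * besselF' t"
proof -
  have "(\<lambda>k. diffs J0_coeff k * t^k) sums besselF' t"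
    unfolding besselF'_def
    by (rule summable_sums, rule summable_powser_inverse_fact_bound[OF abs_diffs_J0_coeff_le])
  from sums_mult[OF this, of t]
  have "(\<lambda>k. (real (Suc k) * J0_coeff (Suc k)) * t^(Suc k)) sums (t * besselF' t)"
    by (simp add: diffs_def mult_ac)
  then have "(\<lambda>k. (real k * J0_coeff k) * t^k) sums (t * besselF' t)"
    using sums_Suc_iff[of "\<lambda>k. (real k * J0_coeff k) * t^k"] by simp
  then show ?thesis unfolding besselG_def by (simp add: sums_iff)
qed

lemma besselF_0 [simp]: "besselF 0 = 1"
  unfolding besselF_def using powser_zero[of J0_coeff] by (simp add: J0_coeff_def)

lemma besselG_0 [simp]: "besselG 0 = 0"
  by (simp add: besselG_eq)

lemma J0_eq_besselF: "J0 x = besselF (x^2/4)"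
  unfolding J0_def besselF_def J0_coeff_def by (simp add: power_mult power_divide)

lemma besselF_scaled_has_derivative:
  "((\<lambda>t. besselF (a * t)) has_real_derivative besselF' (a * t) * a) (at t)"
  by (rule DERIV_chain2[OF besselF_has_derivative]) (auto intro!: derivative_eq_intros)

lemma besselG_scaled_has_derivative:
  "((\<lambda>t. besselG (a * t)) has_real_derivative - besselF (a * t) * a) (at t)"
  by (rule DERIV_chain2[OF besselG_has_derivative]) (auto intro!: derivative_eq_intros)

lemma continuous_on_besselF_scaled: "continuous_on S (\<lambda>t. besselF (a * t))"
  using besselF_scaled_has_derivative
  by (meson DERIV_continuous continuous_at_imp_continuous_on)

definition J0_flux :: "real \<Rightarrow> real" where
  "J0_flux x = 2 * besselG (x^2/4)"

lemma J0_has_derivative: "(J0 has_real_derivative J0_flux x / x) (at x)"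
proof -
  have "((\<lambda>x. besselF (x^2/4)) has_real_derivative besselF' (x^2/4) * (2 * x / 4)) (at x)"
    by (rule DERIV_chain2[OF besselF_has_derivative]) (auto intro!: derivative_eq_intros)
  moreover have "besselF' (x^2/4) * (2 * x / 4) = J0_flux x / x"
    by (cases "x = 0") (simp_all add: J0_flux_def besselG_eq power2_eq_square field_simps)
  ultimately show ?thesis by (simp add: J0_eq_besselF[abs_def])
qed

lemma J0_flux_has_derivative: "(J0_flux has_real_derivative - x * J0 x) (at x)"
proof -
  have "((\<lambda>x. 2 * besselG (x^2/4)) has_real_derivative 2 * (- besselF (x^2/4) * (2 * x / 4))) (at x)"
    by (intro DERIV_cmult DERIV_chain2[OF besselG_has_derivative]) (auto intro!: derivative_eq_intros)
  then show ?thesis unfolding J0_flux_def[abs_def]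
    by (rule DERIV_cong) (simp add: J0_eq_besselF)
qed

lemma J0_0 [simp]: "J0 0 = 1"
  by (simp add: J0_eq_besselF)

lemma isCont_J0: "isCont J0 x"
  using J0_has_derivative by (rule DERIV_isCont)

section \<open>The positive zeros of \<open>J0\<close>\<close>

lemma J0_flux_nonzero_at_root:
  assumes c: "0 < c" "J0 c = 0"
  shows "J0_flux c \<noteq> 0"
proof
  assume flux: "J0_flux c = 0"
  define E where "E x = x^2 * (J0 x)^2 + (J0_flux x)^2" for x
  have dE: "(E has_real_derivative 2 * x * (J0 x)^2) (at x)" for x
    unfolding E_def[abs_def]
    by (rule derivative_eq_intros J0_has_derivative J0_flux_has_derivative refl | simp)+
      (simp add: power2_eq_square algebra_simps)
  have J0_vanishes: "J0 x = 0" if "0 < x" "x < c" for x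
  proof -
    obtain z where z: "x < z" "z < c" "E c - E x = (c - x) * (2 * z * (J0 z)^2)"
      using MVT2[OF \<open>x < c\<close> dE] by blast
    have "0 \<le> (c - x) * (2 * z * (J0 z)^2)" using z that by simp
    moreover have "E c = 0" using c flux by (simp add: E_def)
    ultimately have "x^2 * (J0 x)^2 + (J0_flux x)^2 \<le> 0" using z(3) unfolding E_def by linarith
    moreover have "0 \<le> x^2 * (J0 x)^2" "0 \<le> (J0_flux x)^2" by simp_all
    ultimately have "x^2 * (J0 x)^2 = 0" by linarith
    then show ?thesis using that by simp
  qed
  have "(J0 \<longlongrightarrow> 1) (at_right 0)"
    using isCont_J0[of 0] by (simp add: isCont_def filterlim_at_split)
  then have "\<forall>\<^sub>F x in at_right 0. 0 < J0 x"
    by (rule order_tendstoD) simp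
  then obtain b where "0 < b" "\<And>y. 0 < y \<Longrightarrow> y < b \<Longrightarrow> 0 < J0 y"
    unfolding eventually_at_right_field by blast
  moreover define y where "y = min b c / 2"
  ultimately have "0 < J0 y" using c by simp
  moreover have "J0 y = 0" using c \<open>0 < b\<close> by (intro J0_vanishes) (auto simp: y_def)
  ultimately show False by simp
qed

lemma eventually_J0_nonzero:
  assumes "0 \<le> z"
  shows "\<forall>\<^sub>F y in at z. J0 y \<noteq> 0"
proof (cases "J0 z = 0")
  case True
  then have "0 < z" using assms by (cases "z = 0") auto
  have "((\<lambda>y. (J0 y - J0 z) / (y - z)) \<longlongrightarrow> J0_flux z / z) (at z)"
    using J0_has_derivative[of z] by (simp add: has_field_derivative_iff)
  moreover have "J0_flux z / z \<noteq> 0"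
    using J0_flux_nonzero_at_root[OF \<open>0 < z\<close> True] \<open>0 < z\<close> by simp
  ultimately have "\<forall>\<^sub>F y in at z. (J0 y - J0 z) / (y - z) \<noteq> 0"
    by (rule tendsto_imp_eventually_ne)
  then show ?thesis by (rule eventually_mono) (use True in auto)
next
  case False
  then show ?thesis
    using isCont_J0[of z] by (auto simp: isCont_def intro: tendsto_imp_eventually_ne)
qed

definition J0_zeros_below :: "real \<Rightarrow> real set" where
  "J0_zeros_below x = {y. 0 < y \<and> y < x \<and> J0 y = 0}"

lemma finite_J0_zeros_below: "finite (J0_zeros_below x)"
proof -
  have "finite ({0..x} \<inter> {y. J0 y = 0})"
    by (rule finite_not_islimpt_in_compact)
      (auto simp: islimpt_iff_eventually intro: eventually_J0_nonzero)
  then show ?thesis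
    by (rule rev_finite_subset) (auto simp: J0_zeros_below_def)
qed

text \<open>Sturm comparison with \<open>w(x) = sin (x - a) / sqrt x\<close>, which solves
  \<open>(x w')' + x w = w / (4 x)\<close>: the Wronskian \<open>W = p w - y x w'\<close> is strictly decreasing
  on \<open>[a, a + pi]\<close>, while its endpoint values \<open>- y a sqrt a\<close> and \<open>y (a + pi) sqrt (a + pi)\<close>
  force it to increase.\<close>

lemma bessel0_solution_not_pos_on_pi_interval:
  fixes y p :: "real \<Rightarrow> real"
  assumes a: "0 < a"
    and dy: "\<And>x. 0 < x \<Longrightarrow> (y has_real_derivative p x / x) (at x)"
    and dp: "\<And>x. 0 < x \<Longrightarrow> (p has_real_derivative - x * y x) (at x)"
  shows "\<exists>x\<in>{a..a + pi}. y x \<le> 0"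
proof (rule ccontr)
  assume "\<not> ?thesis"
  then have pos: "\<And>x. a \<le> x \<Longrightarrow> x \<le> a + pi \<Longrightarrow> 0 < y x" by force
  define w where "w x = sin (x - a) / sqrt x" for x
  define q where "q x = cos (x - a) * sqrt x - sin (x - a) / (2 * sqrt x)" for x
  define W where "W x = p x * w x - y x * q x" for x
  have dW: "(W has_real_derivative - y x * sin (x - a) / (4 * x * sqrt x)) (at x)"
    if x: "0 < x" for x
  proof -
    have sx: "sqrt x > 0" "sqrt x * sqrt x = x" using x by simp_all
    have dsq: "(sqrt has_real_derivative inverse (sqrt x) / 2) (at x)"
      using DERIV_real_sqrt[OF x] .
    have dsin: "((\<lambda>x. sin (x - a)) has_real_derivative cos (x - a)) (at x)"
      by (auto intro!: derivative_eq_intros)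
    have dcos: "((\<lambda>x. cos (x - a)) has_real_derivative - sin (x - a)) (at x)"
      by (auto intro!: derivative_eq_intros)
    have dw: "(w has_real_derivative q x / x) (at x)"
      unfolding w_def[abs_def]
      by (rule DERIV_cong[OF DERIV_divide[OF dsin dsq]])
        (use sx in \<open>simp_all add: q_def field_simps\<close>)
    have dq: "(q has_real_derivative - sin (x - a) * sqrt x + sin (x - a) / (4 * x * sqrt x)) (at x)"
      unfolding q_def[abs_def]
      by (rule DERIV_cong[OF DERIV_diff[OF DERIV_mult[OF dcos dsq]
            DERIV_divide[OF dsin DERIV_cmult[OF dsq, of 2]]]])
        (use sx in \<open>simp_all add: field_simps\<close>)
    have xw: "x * w x = sin (x - a) * sqrt x"
      unfolding w_def using sx by (simp add: field_simps)
    show ?thesis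
      unfolding W_def[abs_def]
      by (rule DERIV_cong[OF DERIV_diff[OF DERIV_mult[OF dp[OF x] dw] DERIV_mult[OF dy[OF x] dq]]])
        (use x xw in \<open>simp add: algebra_simps\<close>)
  qed
  have "\<exists>z. a < z \<and> z < a + pi \<and>
      W (a + pi) - W a = (a + pi - a) * (- y z * sin (z - a) / (4 * z * sqrt z))"
  proof (rule MVT2)
    fix x assume "a \<le> x"
    then show "(W has_real_derivative - y x * sin (x - a) / (4 * x * sqrt x)) (at x)"
      using a by (intro dW) simp
  qed simp
  then obtain z where z: "a < z" "z < a + pi"
    and Wz: "W (a + pi) - W a = (a + pi - a) * (- y z * sin (z - a) / (4 * z * sqrt z))"
    by blast
  have "0 < sin (z - a)" using z by (intro sin_gt_zero) auto
  moreover have "0 < y z" using z by (intro pos) auto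
  ultimately have "W (a + pi) - W a < 0"
    using Wz z a by (simp add: mult_pos_pos)
  moreover have "W a = - y a * sqrt a" "W (a + pi) = y (a + pi) * sqrt (a + pi)"
    by (simp_all add: W_def w_def q_def)
  moreover have "0 < y a * sqrt a" "0 < y (a + pi) * sqrt (a + pi)"
    using a by (simp_all add: pos add_pos_pos)
  ultimately show False by linarith
qed

lemma J0_has_zero_in_pi_interval:
  assumes "0 < a"
  shows "\<exists>z\<in>{a..a + pi}. J0 z = 0"
proof -
  obtain x1 where x1: "x1 \<in> {a..a + pi}" "J0 x1 \<le> 0"
    using bessel0_solution_not_pos_on_pi_interval[OF assms J0_has_derivative J0_flux_has_derivative]
    by blast
  obtain x2 where x2: "x2 \<in> {a..a + pi}" "- J0 x2 \<le> 0"
  proof -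
    have "((\<lambda>x. - J0 x) has_real_derivative - J0_flux x / x) (at x)" for x
      using DERIV_minus[OF J0_has_derivative[of x]] by simp
    moreover have "((\<lambda>x. - J0_flux x) has_real_derivative - x * (- J0 x)) (at x)" for x
      using DERIV_minus[OF J0_flux_has_derivative[of x]] by simp
    ultimately show thesis
      using bessel0_solution_not_pos_on_pi_interval[OF assms, of "\<lambda>x. - J0 x" "\<lambda>x. - J0_flux x"]
        that by blast
  qed
  have "connected (J0 ` {a..a + pi})"
    by (intro connected_continuous_image continuous_at_imp_continuous_on ballI isCont_J0) simp
  then have "0 \<in> J0 ` {a..a + pi}"
    by (rule connectedD_interval) (use x1 x2 in auto)
  then show ?thesis by auto
qed

lemma J0_next_zero:
  assumes "0 \<le> b"
  obtains m where "b < m" "J0 m = 0" "\<And>y. b < y \<Longrightarrow> y < m \<Longrightarrow> J0 y \<noteq> 0"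
proof -
  obtain z where "z \<in> {b + 1..b + 1 + pi}" "J0 z = 0"
    using J0_has_zero_in_pi_interval[of "b + 1"] assms by auto
  then have z: "b < z" "J0 z = 0" by auto
  define S where "S = {y. b < y \<and> y \<le> z \<and> J0 y = 0}"
  have "finite S"
    by (rule finite_subset[OF _ finite_J0_zeros_below[of "z + 1"]])
      (use assms in \<open>auto simp: S_def J0_zeros_below_def\<close>)
  moreover have "z \<in> S" using z by (simp add: S_def)
  ultimately have min: "Min S \<in> S" "\<And>y. y \<in> S \<Longrightarrow> Min S \<le> y"
    using Min_in Min_le by blast+
  show ?thesis
  proof (rule that[of "Min S"])
    show "b < Min S" "J0 (Min S) = 0" using min(1) by (simp_all add: S_def)
    fix y assume y: "b < y" "y < Min S"
    then have "y \<notin> S" using min(2) by fastforce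
    moreover have "y \<le> z" using y min(1) by (simp add: S_def)
    ultimately show "J0 y \<noteq> 0" using y by (simp add: S_def)
  qed
qed

lemma card_J0_zeros_below_less:
  assumes "0 < x" "x < x'" "J0 x = 0"
  shows "card (J0_zeros_below x) < card (J0_zeros_below x')"
  by (rule psubset_card_mono[OF finite_J0_zeros_below]) (use assms in \<open>auto simp: J0_zeros_below_def\<close>)

lemma J0_nth_zero_exists: "\<exists>x. 0 < x \<and> J0 x = 0 \<and> card (J0_zeros_below x) = n"
proof (induction n)
  case 0
  obtain m where "0 < m" "J0 m = 0" "\<And>y. 0 < y \<Longrightarrow> y < m \<Longrightarrow> J0 y \<noteq> 0"
    using J0_next_zero[of 0] by auto
  then have "J0_zeros_below m = {}" by (auto simp: J0_zeros_below_def)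
  then show ?case using \<open>0 < m\<close> \<open>J0 m = 0\<close> by auto
next
  case (Suc n)
  then obtain x where x: "0 < x" "J0 x = 0" "card (J0_zeros_below x) = n" by blast
  obtain m where m: "x < m" "J0 m = 0" "\<And>y. x < y \<Longrightarrow> y < m \<Longrightarrow> J0 y \<noteq> 0"
    using J0_next_zero[of x] x by auto
  have "J0_zeros_below m = insert x (J0_zeros_below x)"
    using x m by (auto simp: J0_zeros_below_def) (meson linorder_neqE_linordered_idom)
  then have "card (J0_zeros_below m) = Suc n"
    using x finite_J0_zeros_below[of x] by (simp add: J0_zeros_below_def)
  then show ?case using x m by (intro exI[of _ m]) auto
qed

lemma besselz: "0 < besselz n \<and> J0 (besselz n) = 0 \<and> card (J0_zeros_below (besselz n)) = n"
proof -
  have "\<exists>!x. 0 < x \<and> J0 x = 0 \<and> card (J0_zeros_below x) = n"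
  proof (rule ex_ex1I)
    show "\<exists>x. 0 < x \<and> J0 x = 0 \<and> card (J0_zeros_below x) = n"
      by (rule J0_nth_zero_exists)
  next
    fix x x'
    assume "0 < x \<and> J0 x = 0 \<and> card (J0_zeros_below x) = n"
      and "0 < x' \<and> J0 x' = 0 \<and> card (J0_zeros_below x') = n"
    then show "x = x'"
      using card_J0_zeros_below_less[of x x'] card_J0_zeros_below_less[of x' x]
      by (cases x x' rule: linorder_cases) auto
  qed
  then show ?thesis
    using theI'[where P = "\<lambda>x. 0 < x \<and> J0 x = 0 \<and> card (J0_zeros_below x) = n"]
    unfolding besselz_def J0_zeros_below_def[symmetric]
    by (simp add: finite_J0_zeros_below)
qed

lemma besselz_pos: "0 < besselz n"
  using besselz by blast

lemma J0_besselz: "J0 (besselz n) = 0"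
  using besselz by blast

lemma besselz_inject: "besselz n = besselz m \<longleftrightarrow> n = m"
  using besselz by metis

section \<open>Integrals of radial functions over the unit disc\<close>

lemma emeasure_unit_disc_norm_sq_greater:
  assumes dim: "DIM('a::euclidean_space) = 2"
  shows "emeasure lborel (ball (0::'a) 1 \<inter> {x. c < norm x ^ 2}) = ennreal (pi * min 1 (max 0 (1 - c)))"
proof -
  consider "c < 0" | "0 \<le> c" "c < 1" | "1 \<le> c" by linarith
  then show ?thesis
  proof cases
    case 1
    then have "c < norm x ^ 2" for x :: 'a
      by (smt (verit) zero_le_power2)
    then have "ball (0::'a) 1 \<inter> {x. c < norm x ^ 2} = ball 0 1"
      by blast
    then show ?thesis using 1 by (simp add: emeasure_ball dim unit_ball_vol_2)
  next
    case 2
    have "c < norm x ^ 2 \<longleftrightarrow> sqrt c < norm x" for x :: 'a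
      using real_sqrt_less_iff[of c "norm x ^ 2"] by simp
    then have eq: "ball (0::'a) 1 \<inter> {x. c < norm x ^ 2} = ball 0 1 - cball 0 (sqrt c)"
      by (simp add: set_eq_iff not_le)
    have "cball 0 (sqrt c) \<subseteq> ball (0::'a) 1"
      using 2 by (simp add: cball_subset_ball_iff)
    then have "emeasure lborel (ball 0 1 - cball (0::'a) (sqrt c)) =
          emeasure lborel (ball (0::'a) 1) - emeasure lborel (cball (0::'a) (sqrt c))"
      using emeasure_bounded_finite[of "cball (0::'a) (sqrt c)"] by (intro emeasure_Diff) auto
    also have "\<dots> = ennreal (pi - pi * c)"
      using 2 by (simp add: emeasure_ball emeasure_cball dim unit_ball_vol_2 ennreal_minus)
    finally show ?thesis using eq 2 by (simp add: algebra_simps)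
  next
    case 3
    have "norm x ^ 2 < 1" if "x \<in> ball (0::'a) 1" for x
      using that by (simp add: power_less_one_iff abs_square_less_1)
    then have "ball (0::'a) 1 \<inter> {x. c < norm x ^ 2} = {}"
      using 3 by (smt (verit) disjoint_iff mem_Collect_eq)
    then show ?thesis using 3 by simp
  qed
qed

lemma distr_norm_sq_unit_disc:
  assumes dim: "DIM('a::euclidean_space) = 2"
  shows "distr (density lborel (\<lambda>x. ennreal (indicator (ball (0::'a) 1) x))) borel (\<lambda>x. norm x ^ 2)
       = density lborel (\<lambda>t. ennreal (pi * indicator {0..1} t))"
    (is "?D = ?U")
proof (rule measure_eqI_lessThan)
  have "emeasure ?D {c<..} = ennreal (pi * min 1 (max 0 (1 - c)))" for c
  proof -
    have "open {x::'a. c < norm x ^ 2}"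
      by (intro open_Collect_less continuous_intros)
    then have [measurable]: "{x::'a. c < norm x ^ 2} \<in> sets lborel" by simp
    have [measurable]: "ball (0::'a) 1 \<in> sets lborel" by simp
    have "emeasure ?D {c<..} = emeasure (density lborel (\<lambda>x. ennreal (indicator (ball (0::'a) 1) x)))
        {x. c < norm x ^ 2}"
      by (subst emeasure_distr) (auto simp: vimage_def)
    also have "\<dots> = (\<integral>\<^sup>+ x. ennreal (indicator (ball (0::'a) 1) x) * indicator {x. c < norm x ^ 2} x \<partial>lborel)"
      by (intro emeasure_density) measurable
    also have "\<dots> = (\<integral>\<^sup>+ x. indicator (ball (0::'a) 1 \<inter> {x. c < norm x ^ 2}) x \<partial>lborel)"
      by (intro nn_integral_cong) (simp add: indicator_def)
    also have "\<dots> = emeasure lborel (ball (0::'a) 1 \<inter> {x. c < norm x ^ 2})"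
      by (intro nn_integral_indicator) measurable
    finally show ?thesis using emeasure_unit_disc_norm_sq_greater[OF dim] by simp
  qed
  moreover have "emeasure ?U {c<..} = ennreal (pi * min 1 (max 0 (1 - c)))" for c
  proof -
    have "emeasure ?U {c<..} = (\<integral>\<^sup>+ t. ennreal pi * indicator ({0..1} \<inter> {c<..}) t \<partial>lborel)"
      by (subst emeasure_density) (auto intro!: nn_integral_cong simp: indicator_def)
    also have "\<dots> = ennreal pi * emeasure lborel ({0..1} \<inter> {c<..})"
      by (rule nn_integral_cmult_indicator) simp
    also have "\<dots> = ennreal (pi * min 1 (max 0 (1 - c)))"
    proof -
      consider "c < 0" | "0 \<le> c" "c < 1" | "1 \<le> c" by linarith
      then show ?thesis
      proof cases
        case 1
        then have "{0..1} \<inter> {c<..} = {0..(1::real)}" by auto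
        then show ?thesis using 1 by (simp add: ennreal_mult)
      next
        case 2
        then have "{0..1} \<inter> {c<..} = {c<..(1::real)}" by auto
        then show ?thesis using 2 by (simp add: ennreal_mult)
      next
        case 3
        then have "{0..1} \<inter> {c<..} = ({}::real set)" by auto
        then show ?thesis using 3 by simp
      qed
    qed
    finally show ?thesis .
  qed
  ultimately show "emeasure ?D {c<..} = emeasure ?U {c<..}" "emeasure ?D {c<..} < \<infinity>" for c
    by simp_all
qed simp_all

lemma radial_integral_unit_disc:
  fixes h :: "real \<Rightarrow> real"
  assumes dim: "DIM('a::euclidean_space) = 2" and h: "continuous_on UNIV h"
  shows "set_integrable lborel (ball (0::'a) 1) (\<lambda>x. h (norm x ^ 2))"
    and "(LINT x:ball (0::'a) 1|lborel. h (norm x ^ 2)) = pi * integral {0..1} h"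
proof -
  define D where "D = density lborel (\<lambda>x. ennreal (indicator (ball (0::'a) 1) x))"
  define U where "U = density lborel (\<lambda>t. ennreal (pi * indicator {0..1::real} t))"
  have h_meas [measurable]: "h \<in> borel_measurable borel"
    using h by (rule borel_measurable_continuous_onI)
  have ind_meas: "(indicator (ball (0::'a) 1) :: 'a \<Rightarrow> real) \<in> borel_measurable borel"
    by (intro borel_measurable_indicator) simp
  have norm_sq [measurable]: "(\<lambda>x::'a. norm x ^ 2) \<in> measurable D borel"
    unfolding D_def by measurable
  have distr: "distr D borel (\<lambda>x. norm x ^ 2) = U"
    unfolding D_def U_def by (rule distr_norm_sq_unit_disc[OF dim])
  have int01: "integrable lborel (\<lambda>t. indicator {0..1} t *\<^sub>R h t)"
    by (rule borel_integrable_compact[OF compact_Icc continuous_on_subset[OF h]]) simp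
  have "integrable U h"
    unfolding U_def using integrable_mult_right[OF int01, of pi]
    by (subst integrable_density) (auto simp: mult_ac)
  then have intD: "integrable D (\<lambda>x. h (norm x ^ 2))"
    using integrable_distr_eq[OF norm_sq h_meas] distr by simp
  show "set_integrable lborel (ball (0::'a) 1) (\<lambda>x. h (norm x ^ 2))"
    using intD unfolding D_def set_integrable_def by (subst (asm) integrable_density) (auto simp: ind_meas)
  have "(LINT x:ball (0::'a) 1|lborel. h (norm x ^ 2)) = integral\<^sup>L D (\<lambda>x. h (norm x ^ 2))"
    unfolding D_def set_lebesgue_integral_def by (subst integral_density) (auto simp: ind_meas)
  also have "\<dots> = integral\<^sup>L U h"
    using integral_distr[OF norm_sq h_meas] distr by simp
  also have "\<dots> = pi * (LINT t:{0..1}|lborel. h t)"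
    unfolding U_def set_lebesgue_integral_def by (subst integral_density) (auto simp: mult_ac)
  also have "(LINT t:{0..1}|lborel. h t) = integral {0..1} h"
    using int01 by (intro set_borel_integral_eq_integral(2)) (simp add: set_integrable_def)
  finally show "(LINT x:ball (0::'a) 1|lborel. h (norm x ^ 2)) = pi * integral {0..1} h" .
qed

lemma radial_integral_Theta:
  fixes h :: "real \<Rightarrow> real"
  assumes "continuous_on UNIV h"
  shows "set_integrable lborel Theta (\<lambda>x. h (norm x ^ 2))"
    and "(LINT x:Theta|lborel. h (norm x ^ 2)) = pi * integral {0..1} h"
  using radial_integral_unit_disc[OF _ assms, where 'a = "real^2"] by (simp_all add: Theta_def)

section \<open>Bessel's inequality and Green's identity on \<open>[0, 1]\<close>\<close>

definition inner01 :: "(real \<Rightarrow> real) \<Rightarrow> (real \<Rightarrow> real) \<Rightarrow> real" where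
  "inner01 f g = integral {0..1} (\<lambda>t. f t * g t)"

lemma integrable_product_01:
  fixes f g :: "real \<Rightarrow> real"
  assumes "continuous_on {0..1} f" "continuous_on {0..1} g"
  shows "(\<lambda>t. f t * g t) integrable_on {0..1}"
  by (rule integrable_continuous_interval) (intro continuous_intros assms)

lemma inner01_commute: "inner01 f g = inner01 g f"
  unfolding inner01_def by (simp add: mult.commute)

lemma inner01_sum_right:
  fixes M :: nat
  assumes "continuous_on {0..1} f" "\<And>n. continuous_on {0..1} (e n)"
  shows "inner01 f (\<lambda>t. \<Sum>n<M. c n * e n t) = (\<Sum>n<M. c n * inner01 f (e n))"
proof -
  have "inner01 f (\<lambda>t. \<Sum>n<M. c n * e n t) = integral {0..1} (\<lambda>t. \<Sum>n<M. c n * (f t * e n t))"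
    unfolding inner01_def by (intro integral_cong) (simp add: sum_distrib_left mult_ac)
  also have "\<dots> = (\<Sum>n<M. integral {0..1} (\<lambda>t. c n * (f t * e n t)))"
    by (rule Henstock_Kurzweil_Integration.integral_sum)
      (simp_all add: integrable_on_mult_right integrable_product_01 assms)
  also have "\<dots> = (\<Sum>n<M. c n * inner01 f (e n))"
    unfolding inner01_def by simp
  finally show ?thesis .
qed

lemma bessel_inequality_01:
  fixes e :: "nat \<Rightarrow> real \<Rightarrow> real" and u :: "real \<Rightarrow> real" and M :: nat
  assumes cont_e: "\<And>n. continuous_on {0..1} (e n)" and cont_u: "continuous_on {0..1} u"
    and orth: "\<And>n m. n \<noteq> m \<Longrightarrow> inner01 (e n) (e m) = 0"
    and norm_le: "\<And>n. inner01 (e n) (e n) \<le> 1"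
  shows "(\<Sum>n<M. (inner01 u (e n))^2) \<le> inner01 u u"
proof -
  define c where "c n = inner01 u (e n)" for n
  define S where "S t = (\<Sum>n<M. c n * e n t)" for t
  have cont_S: "continuous_on {0..1} S"
    unfolding S_def by (intro continuous_intros cont_e)
  have uS: "inner01 u S = (\<Sum>n<M. c n * c n)"
    unfolding S_def[abs_def] using inner01_sum_right[OF cont_u cont_e] by (simp add: c_def)
  have Se: "inner01 S (e m) = c m * inner01 (e m) (e m)" if "m < M" for m
  proof -
    have "inner01 S (e m) = (\<Sum>n<M. c n * inner01 (e m) (e n))"
      unfolding S_def[abs_def] inner01_commute[of _ "e m"] by (rule inner01_sum_right[OF cont_e cont_e])
    also have "\<dots> = (\<Sum>n<M. if n = m then c m * inner01 (e m) (e m) else 0)"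
      by (rule sum.cong) (auto simp: orth)
    finally show ?thesis using that by simp
  qed
  have "inner01 S S = (\<Sum>m<M. c m * inner01 S (e m))"
    using inner01_sum_right[OF cont_S cont_e, where M = M and c = c] unfolding S_def[abs_def] by simp
  also have "\<dots> = (\<Sum>m<M. (c m * c m) * inner01 (e m) (e m))"
    by (rule sum.cong) (auto simp: Se)
  also have "\<dots> \<le> (\<Sum>m<M. c m * c m)"
    by (rule sum_mono) (use mult_left_mono[OF norm_le] in simp)
  finally have SS: "inner01 S S \<le> (\<Sum>m<M. c m * c m)" .
  have cont_uS: "continuous_on {0..1} (\<lambda>t. u t - S t)"
    by (intro continuous_on_diff cont_u cont_S)
  have "0 \<le> integral {0..1} (\<lambda>t. (u t - S t) * (u t - S t))"
    by (rule integral_nonneg[OF integrable_product_01[OF cont_uS cont_uS]]) simp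
  also have "\<dots> = integral {0..1} (\<lambda>t. u t * u t + S t * S t - 2 * (u t * S t))"
    by (rule integral_cong) (simp add: algebra_simps)
  also have "\<dots> = inner01 u u + inner01 S S - 2 * inner01 u S"
    unfolding inner01_def
    using integrable_product_01[OF cont_u cont_u] integrable_product_01[OF cont_u cont_S]
      integrable_product_01[OF cont_S cont_S]
    by (simp add: integral_diff integral_add integrable_add integrable_on_mult_right)
  finally show ?thesis using SS uS unfolding c_def by (simp add: power2_eq_square)
qed

lemma has_integral_01_of_has_real_derivative:
  fixes \<Phi> \<Phi>' :: "real \<Rightarrow> real"
  assumes "\<And>t. (\<Phi> has_real_derivative \<Phi>' t) (at t)"
  shows "(\<Phi>' has_integral (\<Phi> 1 - \<Phi> 0)) {0..1}"
  by (rule fundamental_theorem_of_calculus)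
    (auto simp: has_real_derivative_iff_has_vector_derivative[symmetric]
      intro: has_field_derivative_at_within assms)

text \<open>Both identities below integrate a Wronskian-type expression built from
  \<open>besselG (a * t) = a t besselF' (a t)\<close>, whose boundary terms vanish because
  \<open>besselF a = 0\<close> and \<open>besselG 0 = 0\<close>.\<close>

lemma inner01_besselF_scaled_orthogonal:
  assumes "a \<noteq> b" "besselF a = 0" "besselF b = 0"
  shows "inner01 (\<lambda>t. besselF (a * t)) (\<lambda>t. besselF (b * t)) = 0"
proof -
  define \<Phi> where "\<Phi> t = besselF (a * t) * besselG (b * t) - besselG (a * t) * besselF (b * t)" for t
  have "(\<Phi> has_real_derivative (a - b) * (besselF (a * t) * besselF (b * t))) (at t)" for t
    unfolding \<Phi>_def[abs_def]
    by (rule DERIV_cong[OF DERIV_diff[OF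
          DERIV_mult[OF besselF_scaled_has_derivative besselG_scaled_has_derivative]
          DERIV_mult[OF besselG_scaled_has_derivative besselF_scaled_has_derivative]]])
      (simp add: besselG_eq algebra_simps)
  from has_integral_01_of_has_real_derivative[OF this]
  have "((\<lambda>t. (a - b) * (besselF (a * t) * besselF (b * t))) has_integral 0) {0..1}"
    using assms by (simp add: \<Phi>_def)
  then have "integral {0..1} (\<lambda>t. (a - b) * (besselF (a * t) * besselF (b * t))) = 0"
    by (rule integral_unique)
  then have "(a - b) * inner01 (\<lambda>t. besselF (a * t)) (\<lambda>t. besselF (b * t)) = 0"
    unfolding inner01_def by simp
  then show ?thesis using assms by simp
qed

lemma inner01_besselF_scaled_green:
  fixes \<psi> \<psi>' L :: "real \<Rightarrow> real"
  assumes "besselF a = 0" "\<psi> 1 = 0"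
    and d\<psi>: "\<And>t. (\<psi> has_real_derivative \<psi>' t) (at t)"
    and dP: "\<And>t. ((\<lambda>t. t * \<psi>' t) has_real_derivative L t) (at t)"
    and cont_L: "continuous_on {0..1} L"
  shows "inner01 (\<lambda>t. besselF (a * t)) L = - a * inner01 (\<lambda>t. besselF (a * t)) \<psi>"
proof -
  define \<Phi> where "\<Phi> t = besselF (a * t) * (t * \<psi>' t) - besselG (a * t) * \<psi> t" for t
  have "(\<Phi> has_real_derivative besselF (a * t) * L t + a * (besselF (a * t) * \<psi> t)) (at t)" for t
    unfolding \<Phi>_def[abs_def]
    by (rule DERIV_cong[OF DERIV_diff[OF DERIV_mult[OF besselF_scaled_has_derivative dP]
          DERIV_mult[OF besselG_scaled_has_derivative d\<psi>]]])
      (simp add: besselG_eq algebra_simps)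
  from has_integral_01_of_has_real_derivative[OF this]
  have "((\<lambda>t. besselF (a * t) * L t + a * (besselF (a * t) * \<psi> t)) has_integral 0) {0..1}"
    using assms by (simp add: \<Phi>_def)
  then have "integral {0..1} (\<lambda>t. besselF (a * t) * L t + a * (besselF (a * t) * \<psi> t)) = 0"
    by (rule integral_unique)
  moreover have "continuous_on {0..1} \<psi>"
    using d\<psi> by (meson DERIV_continuous continuous_at_imp_continuous_on)
  then have "(\<lambda>t. a * (besselF (a * t) * \<psi> t)) integrable_on {0..1}"
    by (intro integrable_on_mult_right integrable_product_01 continuous_on_besselF_scaled)
  moreover have "(\<lambda>t. besselF (a * t) * L t) integrable_on {0..1}"
    by (intro integrable_product_01 continuous_on_besselF_scaled cont_L)
  ultimately show ?thesis
    unfolding inner01_def by (simp add: integral_add)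
qed

section \<open>Coefficients of radial functions\<close>

lemma inner01_cmult_left: "inner01 (\<lambda>t. c * f t) g = c * inner01 f g"
  unfolding inner01_def by (simp add: mult.assoc)

lemma inner01_cmult_right: "inner01 f (\<lambda>t. c * g t) = c * inner01 f g"
  unfolding inner01_def by (simp add: mult.left_commute)

text \<open>In the variable \<open>t = r\<^sup>2\<close>, \<open>eigen n r = eigen01 n t / sqrt pi\<close>. Since
  \<open>\<integral>\<^sub>\<Theta> f (|x|\<^sup>2) dx = pi * \<integral>\<^sub>0\<^sup>1 f\<close>, the coefficient of \<open>\<psi>(|x|\<^sup>2)\<close> is
  \<open>sqrt pi * inner01 \<psi> (eigen01 n)\<close>.\<close>

definition eigen_scale :: "nat \<Rightarrow> real" where
  "eigen_scale n = (besselz n)^2 / 4"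

definition eigen_normsq :: "nat \<Rightarrow> real" where
  "eigen_normsq n = (LINT x:Theta|lborel. (J0 (besselz n * norm x))^2)"

definition eigen01 :: "nat \<Rightarrow> real \<Rightarrow> real" where
  "eigen01 n t = sqrt pi / sqrt (eigen_normsq n) * besselF (eigen_scale n * t)"

lemma J0_mult_eq_besselF: "J0 (z * r) = besselF (z^2 / 4 * r^2)"
  by (simp add: J0_eq_besselF power_mult_distrib)

lemma eigen_norm_eq: "eigen n (norm x) = besselF (eigen_scale n * norm x ^ 2) / sqrt (eigen_normsq n)"
  unfolding eigen_def eigen_normsq_def eigen_scale_def J0_mult_eq_besselF by simp

lemma besselF_eigen_scale: "besselF (eigen_scale n) = 0"
  using J0_besselz[of n] by (simp add: J0_eq_besselF eigen_scale_def)

lemma eigen_scale_inject: "eigen_scale n = eigen_scale m \<longleftrightarrow> n = m"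
  using besselz_pos[of n] besselz_pos[of m] besselz_inject[of n m]
  by (auto simp: eigen_scale_def power2_eq_iff_nonneg)

lemma eigen01_eq: "eigen01 n = (\<lambda>t. sqrt pi / sqrt (eigen_normsq n) * besselF (eigen_scale n * t))"
  by (simp add: fun_eq_iff eigen01_def)

lemma inner01_eigen01_right:
  "inner01 f (eigen01 n) = sqrt pi / sqrt (eigen_normsq n) * inner01 (\<lambda>t. besselF (eigen_scale n * t)) f"
  unfolding eigen01_eq inner01_cmult_right by (simp only: inner01_commute[of f])

lemma continuous_on_eigen01: "continuous_on S (eigen01 n)"
  unfolding eigen01_eq by (intro continuous_intros continuous_on_besselF_scaled)

lemma eigen_normsq_eq:
  "eigen_normsq n = pi * inner01 (\<lambda>t. besselF (eigen_scale n * t)) (\<lambda>t. besselF (eigen_scale n * t))"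
proof -
  have "eigen_normsq n = (LINT x:Theta|lborel.
      (\<lambda>t. besselF (eigen_scale n * t) * besselF (eigen_scale n * t)) (norm x ^ 2))"
    unfolding eigen_normsq_def J0_mult_eq_besselF eigen_scale_def by (simp add: power2_eq_square)
  also have "\<dots> = pi * integral {0..1} (\<lambda>t. besselF (eigen_scale n * t) * besselF (eigen_scale n * t))"
    by (rule radial_integral_Theta(2)) (intro continuous_intros continuous_on_besselF_scaled)
  finally show ?thesis unfolding inner01_def .
qed

lemma inner01_eigen01_orthogonal:
  assumes "n \<noteq> m"
  shows "inner01 (eigen01 n) (eigen01 m) = 0"
  using inner01_besselF_scaled_orthogonal[of "eigen_scale n" "eigen_scale m"] assms
  unfolding eigen01_eq inner01_cmult_left inner01_cmult_right
  by (simp add: eigen_scale_inject besselF_eigen_scale)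

lemma inner01_eigen01_self_le: "inner01 (eigen01 n) (eigen01 n) \<le> 1"
proof -
  have N: "0 \<le> eigen_normsq n"
    unfolding eigen_normsq_def set_lebesgue_integral_def
    by (rule Bochner_Integration.integral_nonneg) (simp add: indicator_def)
  have "inner01 (eigen01 n) (eigen01 n) = (sqrt pi / sqrt (eigen_normsq n))^2 * (eigen_normsq n / pi)"
    unfolding eigen01_eq inner01_cmult_left inner01_cmult_right eigen_normsq_eq[of n]
    by (simp add: power2_eq_square)
  also have "\<dots> = (if eigen_normsq n = 0 then 0 else 1)"
    using N by (simp add: power_divide)
  finally show ?thesis by simp
qed

lemma coef_radial:
  fixes \<psi> :: "real \<Rightarrow> real"
  assumes "continuous_on UNIV \<psi>"
  shows "coef n (\<lambda>x. complex_of_real (\<psi> (norm x ^ 2))) = complex_of_real (sqrt pi * inner01 \<psi> (eigen01 n))"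
proof -
  define c where "c = 1 / sqrt (eigen_normsq n)"
  define h where "h t = c * besselF (eigen_scale n * t) * \<psi> t" for t
  have "coef n (\<lambda>x. complex_of_real (\<psi> (norm x ^ 2))) = complex_of_real (LINT x:Theta|lborel. h (norm x ^ 2))"
    unfolding coef_def eigen_norm_eq h_def c_def scaleR_conv_of_real
    by (simp add: set_integral_complex_of_real[symmetric])
  also have "(LINT x:Theta|lborel. h (norm x ^ 2)) = pi * integral {0..1} h"
    unfolding h_def
    by (rule radial_integral_Theta(2)) (intro continuous_intros continuous_on_besselF_scaled assms)
  also have "pi * integral {0..1} h = sqrt pi * inner01 \<psi> (eigen01 n)"
  proof -
    have "pi = sqrt pi * sqrt pi" by simp
    then show ?thesis
      unfolding inner01_def eigen01_def h_def c_def by (simp add: field_simps)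
  qed
  finally show ?thesis .
qed

lemma norm_coef_radial_sq:
  fixes \<psi> :: "real \<Rightarrow> real"
  assumes "continuous_on UNIV \<psi>"
  shows "(cmod (coef n (\<lambda>x. complex_of_real (\<psi> (norm x ^ 2)))))^2 = pi * (inner01 \<psi> (eigen01 n))^2"
  unfolding coef_radial[OF assms] norm_of_real by (simp add: power_mult_distrib)

lemma radial_coef_bessel_inequality:
  fixes \<psi> :: "real \<Rightarrow> real"
  assumes cont: "continuous_on UNIV \<psi>"
  defines "a \<equiv> \<lambda>n. (cmod (coef n (\<lambda>x. complex_of_real (\<psi> (norm x ^ 2)))))^2"
  shows "summable a" and "suminf a \<le> pi * inner01 \<psi> \<psi>"
proof -
  have partial: "(\<Sum>n<M. a n) \<le> pi * inner01 \<psi> \<psi>" for M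
    unfolding a_def norm_coef_radial_sq[OF cont] sum_distrib_left[symmetric]
    using bessel_inequality_01[OF continuous_on_eigen01 continuous_on_subset[OF cont]
        inner01_eigen01_orthogonal inner01_eigen01_self_le]
    by (simp add: mult_left_mono)
  show "summable a"
    by (rule bounded_imp_summable[of _ "pi * inner01 \<psi> \<psi>"])
      (use partial[of "Suc _"] in \<open>simp_all add: a_def lessThan_Suc_atMost\<close>)
  then show "suminf a \<le> pi * inner01 \<psi> \<psi>"
    using partial by (rule suminf_le_const)
qed

lemma radial_in_L2_rad:
  fixes \<psi> :: "real \<Rightarrow> real"
  assumes "continuous_on UNIV \<psi>"
  shows "(\<lambda>x. complex_of_real (\<psi> (norm x ^ 2))) \<in> L2_rad"
proof -
  have [measurable]: "\<psi> \<in> borel_measurable borel"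
    using assms by (rule borel_measurable_continuous_onI)
  have [measurable]: "Theta \<in> sets borel" by (simp add: Theta_def)
  have "set_borel_measurable lborel Theta (\<lambda>x. complex_of_real (\<psi> (norm x ^ 2)))"
    unfolding set_borel_measurable_def by measurable
  moreover have "set_integrable lborel Theta (\<lambda>x. \<psi> (norm x ^ 2) * \<psi> (norm x ^ 2))"
    using radial_integral_Theta(1)[of "\<lambda>t. \<psi> t * \<psi> t"] assms by (simp add: continuous_on_mult)
  ultimately show ?thesis
    unfolding L2_rad_def radial_on_def by (simp add: power2_eq_square)
qed

section \<open>Interpolation between \<open>L\<^sup>2\<close> and \<open>H\<^sup>2\<close>\<close>

lemma powr_interpolation_weight_le:
  fixes z \<Lambda> \<sigma> :: real
  assumes "0 < z" "0 < \<Lambda>" "0 \<le> \<sigma>" "\<sigma> \<le> 2"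
  shows "z powr (2 * \<sigma>) \<le> \<Lambda> powr \<sigma> + \<Lambda> powr (\<sigma> - 2) * z^4"
proof -
  have z2: "z powr (2 * \<sigma>) = (z^2) powr \<sigma>" "z^4 = (z^2) powr 2"
    using assms(1) by (simp_all add: powr_powr powr_realpow[symmetric] flip: powr_numeral)
  show ?thesis
  proof (cases "z^2 \<le> \<Lambda>")
    case True
    then have "(z^2) powr \<sigma> \<le> \<Lambda> powr \<sigma>" by (intro powr_mono2) (use assms in auto)
    then show ?thesis unfolding z2 by (simp add: add_increasing2)
  next
    case False
    have "(z^2) powr \<sigma> = (z^2) powr (\<sigma> - 2) * (z^2) powr 2"
      by (subst powr_add[symmetric]) simp
    also have "\<dots> \<le> \<Lambda> powr (\<sigma> - 2) * (z^2) powr 2"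
      using False assms by (intro mult_right_mono powr_mono2') auto
    finally show ?thesis unfolding z2 by (simp add: add_increasing)
  qed
qed

text \<open>Splitting the spectrum at \<open>z\<^sub>n\<^sup>2 = \<Lambda>\<close>, the coefficients of \<open>\<psi>(|x|\<^sup>2)\<close> are
  controlled by Bessel's inequality for \<open>\<psi>\<close> and for \<open>L\<close>: by Green's identity,
  \<open>4 L(|x|\<^sup>2) = \<Delta> \<psi>(|x|\<^sup>2)\<close> has coefficients \<open>- z\<^sub>n\<^sup>2\<close> times those of \<open>\<psi>(|x|\<^sup>2)\<close>.\<close>

lemma radial_H_norm_interpolation:
  fixes \<psi> \<psi>' L :: "real \<Rightarrow> real"
  assumes "\<psi> 1 = 0"
    and d\<psi>: "\<And>t. (\<psi> has_real_derivative \<psi>' t) (at t)"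
    and dP: "\<And>t. ((\<lambda>t. t * \<psi>' t) has_real_derivative L t) (at t)"
    and cont_L: "continuous_on UNIV L"
    and \<sigma>: "0 \<le> \<sigma>" "\<sigma> \<le> 2" and \<Lambda>: "0 < \<Lambda>"
  defines "u \<equiv> \<lambda>x. complex_of_real (\<psi> (norm x ^ 2))"
  shows "u \<in> H_rad \<sigma>"
    and "(H_norm \<sigma> u)^2 \<le> pi * (\<Lambda> powr \<sigma> * inner01 \<psi> \<psi> + 16 * \<Lambda> powr (\<sigma> - 2) * inner01 L L)"
proof -
  define a where "a n = (cmod (coef n u))^2" for n
  define b where "b n = (cmod (coef n (\<lambda>x. complex_of_real (L (norm x ^ 2)))))^2" for n
  have cont_\<psi>: "continuous_on UNIV \<psi>"
    using d\<psi> by (meson DERIV_continuous continuous_at_imp_continuous_on)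
  have sa: "summable a" and Sa: "suminf a \<le> pi * inner01 \<psi> \<psi>"
    unfolding a_def u_def by (rule radial_coef_bessel_inequality[OF cont_\<psi>])+
  have sb: "summable b" and Sb: "suminf b \<le> pi * inner01 L L"
    unfolding b_def by (rule radial_coef_bessel_inequality[OF cont_L])+
  have green: "inner01 L (eigen01 n) = - eigen_scale n * inner01 \<psi> (eigen01 n)" for n
    using inner01_besselF_scaled_green[OF besselF_eigen_scale \<open>\<psi> 1 = 0\<close> d\<psi> dP
        continuous_on_subset[OF cont_L]]
    by (simp add: inner01_eigen01_right)
  have ab: "(besselz n)^4 * a n = 16 * b n" for n
    unfolding a_def b_def u_def norm_coef_radial_sq[OF cont_\<psi>] norm_coef_radial_sq[OF cont_L]
      green eigen_scale_def
    by (simp add: power_mult_distrib field_simps)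
  have le: "besselz n powr (2 * \<sigma>) * a n \<le> \<Lambda> powr \<sigma> * a n + 16 * \<Lambda> powr (\<sigma> - 2) * b n" for n
  proof -
    have "besselz n powr (2 * \<sigma>) * a n \<le> (\<Lambda> powr \<sigma> + \<Lambda> powr (\<sigma> - 2) * (besselz n)^4) * a n"
      by (intro mult_right_mono powr_interpolation_weight_le besselz_pos \<Lambda> \<sigma>) (simp add: a_def)
    also have "\<dots> = \<Lambda> powr \<sigma> * a n + \<Lambda> powr (\<sigma> - 2) * ((besselz n)^4 * a n)"
      by (simp add: algebra_simps)
    finally show ?thesis unfolding ab by simp
  qed
  have sr: "summable (\<lambda>n. \<Lambda> powr \<sigma> * a n + 16 * \<Lambda> powr (\<sigma> - 2) * b n)"
    by (intro summable_add summable_mult sa sb)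
  have st: "summable (\<lambda>n. besselz n powr (2 * \<sigma>) * a n)"
    by (rule summable_comparison_test'[OF sr, of 0]) (use le in \<open>simp add: a_def\<close>)
  then show "u \<in> H_rad \<sigma>"
    unfolding H_rad_def a_def u_def using radial_in_L2_rad[OF cont_\<psi>] by simp
  have "(H_norm \<sigma> u)^2 = (\<Sum>n. besselz n powr (2 * \<sigma>) * a n)"
    unfolding H_norm_def a_def using suminf_nonneg[OF st] by (simp add: a_def)
  also have "\<dots> \<le> (\<Sum>n. \<Lambda> powr \<sigma> * a n + 16 * \<Lambda> powr (\<sigma> - 2) * b n)"
    by (rule suminf_le[OF le st sr])
  also have "\<dots> = \<Lambda> powr \<sigma> * suminf a + 16 * \<Lambda> powr (\<sigma> - 2) * suminf b"
    using sa sb by (simp add: suminf_add[symmetric] summable_mult suminf_mult)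
  also have "\<dots> \<le> \<Lambda> powr \<sigma> * (pi * inner01 \<psi> \<psi>) + 16 * \<Lambda> powr (\<sigma> - 2) * (pi * inner01 L L)"
    by (intro add_mono mult_left_mono Sa Sb) simp_all
  finally show "(H_norm \<sigma> u)^2 \<le> pi * (\<Lambda> powr \<sigma> * inner01 \<psi> \<psi> + 16 * \<Lambda> powr (\<sigma> - 2) * inner01 L L)"
    by (simp add: algebra_simps)
qed

section \<open>The test functions\<close>

lemma one_minus_power_has_derivative:
  "((\<lambda>t::real. (1 - t)^Suc n) has_real_derivative - real (Suc n) * (1 - t)^n) (at t)"
  by (rule DERIV_cong[OF DERIV_chain2[OF DERIV_pow DERIV_diff[OF DERIV_const DERIV_ident]]])
    (simp add: algebra_simps)

lemma has_integral_one_minus_power: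
  "((\<lambda>t::real. (1 - t)^j) has_integral 1 / (real j + 1)) {0..1}"
proof -
  have "((\<lambda>t::real. - (1 / (real j + 1)) * (1 - t)^(Suc j)) has_real_derivative (1 - t)^j) (at t)" for t
    by (rule DERIV_cong[OF DERIV_cmult[OF one_minus_power_has_derivative]]) (simp add: field_simps)
  from has_integral_01_of_has_real_derivative[OF this] show ?thesis by simp
qed

lemma has_integral_one_minus_powr:
  fixes q :: real
  assumes "-1 < q"
  shows "((\<lambda>t. (1 - t) powr q) has_integral 1 / (q + 1)) {0..1}"
proof -
  define \<Phi> where "\<Phi> t = - (1 / (q + 1)) * (1 - t) powr (q + 1)" for t :: real
  have "((\<lambda>t. (1 - t) powr q) has_integral (\<Phi> 1 - \<Phi> 0)) {0..1}"
  proof (rule fundamental_theorem_of_calculus_interior)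
    show "continuous_on {0..1} \<Phi>"
      unfolding \<Phi>_def by (intro continuous_intros continuous_on_powr') (use assms in auto)
  next
    fix x :: real assume x: "x \<in> {0<..<1}"
    have "((\<lambda>t. (1 - t) powr (q + 1)) has_real_derivative (q + 1) * (1 - x) powr (q + 1 - 1) * (0 - 1)) (at x)"
      by (rule DERIV_chain2[OF has_real_derivative_powr DERIV_diff[OF DERIV_const DERIV_ident]])
        (use x in simp)
    then have "(\<Phi> has_real_derivative (1 - x) powr q) (at x)"
      unfolding \<Phi>_def by (rule DERIV_cong[OF DERIV_cmult]) (use assms in \<open>simp add: field_simps\<close>)
    then show "(\<Phi> has_vector_derivative (1 - x) powr q) (at x)"
      by (simp add: has_real_derivative_iff_has_vector_derivative)
  qed simp
  then show ?thesis by (simp add: \<Phi>_def)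
qed

lemma has_integral_sq_mult_one_minus_power:
  "((\<lambda>t::real. t^2 * (1 - t)^j) has_integral 2 / ((real j + 1) * (real j + 2) * (real j + 3))) {0..1}"
proof -
  define x where "x = real j"
  have "((\<lambda>t::real. (1 - t)^j - 2 * (1 - t)^(j + 1) + (1 - t)^(j + 2)) has_integral
      1 / (x + 1) - 2 * (1 / (x + 2)) + 1 / (x + 3)) {0..1}"
    using has_integral_one_minus_power[of j] has_integral_one_minus_power[of "j + 1"]
      has_integral_one_minus_power[of "j + 2"]
    by (intro has_integral_add has_integral_diff has_integral_mult_right)
      (simp_all add: x_def add_ac numeral_2_eq_2 numeral_3_eq_3)
  moreover have "(\<lambda>t::real. (1 - t)^j - 2 * (1 - t)^(j + 1) + (1 - t)^(j + 2)) = (\<lambda>t. t^2 * (1 - t)^j)"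
    by (simp add: fun_eq_iff power_add power2_eq_square algebra_simps)
  moreover have "1 / (x + 1) - 2 * (1 / (x + 2)) + 1 / (x + 3) = 2 / ((x + 1) * (x + 2) * (x + 3))"
  proof -
    have "0 \<le> x" by (simp add: x_def)
    then have "1 / (x + 1) - 2 * (1 / (x + 2)) + 1 / (x + 3) - 2 / ((x + 1) * (x + 2) * (x + 3))
        = ((x + 2) * (x + 3) - 2 * (x + 1) * (x + 3) + (x + 1) * (x + 2) - 2) / ((x + 1) * (x + 2) * (x + 3))"
      by (simp add: divide_simps) (simp add: algebra_simps)
    also have "(x + 2) * (x + 3) - 2 * (x + 1) * (x + 3) + (x + 1) * (x + 2) - 2 = 0"
      by (simp add: algebra_simps)
    finally show ?thesis by simp
  qed
  ultimately show ?thesis unfolding x_def by (simp only:)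
qed

text \<open>\<open>test_laplacian k\<close> is \<open>(t \<psi>'(t))'\<close> for \<open>\<psi> = test_profile k\<close>, i.e. a quarter of the
  Laplacian of \<open>test_function k\<close> in the variable \<open>t = |x|\<^sup>2\<close>.\<close>

definition test_profile :: "nat \<Rightarrow> real \<Rightarrow> real" where
  "test_profile k t = (1 - t)^(k + 2)"

definition test_laplacian :: "nat \<Rightarrow> real \<Rightarrow> real" where
  "test_laplacian k t = (real k + 2) * (1 - t)^k * ((real k + 2) * t - 1)"

definition test_function :: "nat \<Rightarrow> real^2 \<Rightarrow> complex" where
  "test_function k x = complex_of_real (test_profile k (norm x ^ 2))"

lemma test_profile_has_derivative:
  "(test_profile k has_real_derivative - (real k + 2) * (1 - t)^(k + 1)) (at t)"
proof -
  have "test_profile k = (\<lambda>t. (1 - t)^Suc (Suc k))"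
    by (simp add: fun_eq_iff test_profile_def)
  then show ?thesis
    by (simp only:) (rule DERIV_cong[OF one_minus_power_has_derivative], simp)
qed

lemma test_profile_flux_has_derivative:
  "((\<lambda>t. t * (- (real k + 2) * (1 - t)^(k + 1))) has_real_derivative test_laplacian k t) (at t)"
  unfolding Suc_eq_plus1[symmetric]
  by (rule DERIV_cong[OF DERIV_mult[OF DERIV_ident DERIV_cmult[OF one_minus_power_has_derivative]]])
    (simp add: test_laplacian_def algebra_simps)

lemma inner01_test_profile: "inner01 (test_profile k) (test_profile k) = 1 / (2 * real k + 5)"
proof -
  have "2 * k + 4 = (k + 2) + (k + 2)" by simp
  then have "inner01 (test_profile k) (test_profile k) = integral {0..1} (\<lambda>t::real. (1 - t)^(2 * k + 4))"
    unfolding inner01_def test_profile_def by (simp only: power_add)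
  also have "\<dots> = 1 / (real (2 * k + 4) + 1)"
    by (rule integral_unique[OF has_integral_one_minus_power])
  finally show ?thesis by simp
qed

lemma inner01_test_laplacian_le: "inner01 (test_laplacian k) (test_laplacian k) \<le> 12 * (real k + 2)"
proof -
  define m where "m = real k + 2"
  define A where "A = (2 * real k + 2) * (2 * real k + 3)"
  define B where "B = 2 * real k + 1"
  have "A - m^2 = 3 * (real k)^2 + 6 * real k + 2"
    by (simp add: A_def m_def power2_eq_square algebra_simps)
  moreover have "0 < m^2" "0 < B" "m \<le> 4 * B"
    by (simp_all add: B_def m_def)
  ultimately have AB: "0 < A" "0 < B" "m^2 \<le> A" "m \<le> 4 * B"
    using zero_le_power2[of "real k"] by linarith+
  have "test_laplacian k t * test_laplacian k t \<le> m^2 * (m^2 * (t^2 * (1 - t)^(2 * k)) + (1 - t)^(2 * k))"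
    if "t \<in> {0..1}" for t
  proof -
    have "test_laplacian k t * test_laplacian k t = m^2 * ((1 - t)^k)^2 * (m * t - 1)^2"
      unfolding test_laplacian_def m_def by (simp add: power2_eq_square algebra_simps)
    also have "\<dots> \<le> m^2 * ((1 - t)^k)^2 * (m^2 * t^2 + 1)"
    proof (rule mult_left_mono)
      show "(m * t - 1)^2 \<le> m^2 * t^2 + 1"
        using that by (simp add: power2_eq_square algebra_simps m_def)
    qed simp
    also have "((1 - t)^k)^2 = (1 - t)^(2 * k)"
      by (metis power_mult mult.commute)
    finally show ?thesis by (simp add: algebra_simps)
  qed
  moreover have "((\<lambda>t. m^2 * (m^2 * (t^2 * (1 - t)^(2 * k)) + (1 - t)^(2 * k))) has_integral
      m^2 * (m^2 * (2 / (B * A)) + 1 / B)) {0..1}"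
    using has_integral_sq_mult_one_minus_power[of "2 * k"] has_integral_one_minus_power[of "2 * k"]
    unfolding A_def B_def
    by (intro has_integral_mult_right has_integral_add) (simp_all add: algebra_simps)
  moreover have "continuous_on {0..1} (test_laplacian k)"
    unfolding test_laplacian_def[abs_def] by (intro continuous_intros)
  ultimately have "inner01 (test_laplacian k) (test_laplacian k) \<le> m^2 * (m^2 * (2 / (B * A)) + 1 / B)"
    unfolding inner01_def
    by (intro has_integral_le[OF integrable_integral[OF integrable_product_01]]) auto
  also have "\<dots> \<le> m^2 * (A * (2 / (B * A)) + 1 / B)"
    using AB by (intro mult_left_mono add_right_mono mult_right_mono) simp_all
  also have "\<dots> = m * (3 * m / B)"
    using AB by (simp add: field_simps power2_eq_square)
  also have "\<dots> \<le> m * 12"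
    using AB by (intro mult_left_mono) (simp_all add: m_def divide_le_eq)
  finally show ?thesis by (simp add: m_def)
qed

lemma integral_test_function_powr:
  fixes p :: real
  assumes "0 < p"
  shows "(LINT x:Theta|lborel. cmod (test_function k x) powr p) = pi / ((real k + 2) * p + 1)"
proof -
  have "continuous_on UNIV (\<lambda>t. \<bar>test_profile k t\<bar> powr p)"
    unfolding test_profile_def by (intro continuous_on_powr' continuous_intros) (use assms in auto)
  then have "(LINT x:Theta|lborel. cmod (test_function k x) powr p)
      = pi * integral {0..1} (\<lambda>t. \<bar>test_profile k t\<bar> powr p)"
    unfolding test_function_def norm_of_real by (rule radial_integral_Theta(2))
  also have "integral {0..1} (\<lambda>t. \<bar>test_profile k t\<bar> powr p)
      = integral {0..1} (\<lambda>t. (1 - t) powr ((real k + 2) * p))"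
  proof (rule integral_cong)
    fix t :: real assume "t \<in> {0..1}"
    show "\<bar>test_profile k t\<bar> powr p = (1 - t) powr ((real k + 2) * p)"
    proof (cases "t = 1")
      case False
      then have "0 < 1 - t" using \<open>t \<in> {0..1}\<close> by simp
      then have "\<bar>test_profile k t\<bar> = (1 - t) powr real (k + 2)"
        unfolding test_profile_def by (simp only: powr_realpow) simp
      then show ?thesis by (simp add: powr_powr add.commute[of 2])
    qed (simp add: test_profile_def)
  qed
  also have "\<dots> = 1 / ((real k + 2) * p + 1)"
  proof (rule integral_unique[OF has_integral_one_minus_powr])
    have "0 < (real k + 2) * p" using assms by simp
    then show "-1 < (real k + 2) * p" by linarith
  qed
  finally show ?thesis by simp
qed

lemma H_norm_test_function:
  assumes "0 \<le> \<sigma>" "\<sigma> \<le> 2"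
  shows "test_function k \<in> H_rad \<sigma>"
    and "H_norm \<sigma> (test_function k) \<le> sqrt (193 * pi) * (real k + 2) powr ((\<sigma> - 1) / 2)"
proof -
  have test_function_eq: "test_function k = (\<lambda>x. complex_of_real (test_profile k (norm x ^ 2)))"
    by (simp add: fun_eq_iff test_function_def)
  define m where "m = real k + 2"
  have m: "0 < m" by (simp add: m_def)
  note interpolation = radial_H_norm_interpolation[OF _ test_profile_has_derivative
      test_profile_flux_has_derivative _ assms(1,2) m]
  have cont_L: "continuous_on UNIV (test_laplacian k)"
    unfolding test_laplacian_def[abs_def] by (intro continuous_intros)
  show "test_function k \<in> H_rad \<sigma>"
    unfolding test_function_eq by (rule interpolation(1)) (simp_all add: test_profile_def cont_L)
  have "(H_norm \<sigma> (test_function k))^2 \<le> pi * (m powr \<sigma> * inner01 (test_profile k) (test_profile k)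
      + 16 * m powr (\<sigma> - 2) * inner01 (test_laplacian k) (test_laplacian k))"
    unfolding test_function_eq by (rule interpolation(2)) (simp_all add: test_profile_def cont_L)
  also have "\<dots> \<le> pi * (m powr \<sigma> * (1 / m) + 16 * m powr (\<sigma> - 2) * (12 * m))"
    using inner01_test_laplacian_le[of k]
    by (intro mult_left_mono add_mono) (simp_all add: inner01_test_profile m_def frac_le)
  also have "\<dots> = pi * (m powr \<sigma> * (1 / m) + 192 * (m powr (\<sigma> - 2) * m))"
    by simp
  also have "m powr \<sigma> * (1 / m) = m powr (\<sigma> - 1)"
    using m by (simp add: powr_diff)
  also have "m powr (\<sigma> - 2) * m = m powr (\<sigma> - 1)"
    using m powr_add[of m "\<sigma> - 2" 1] by simp
  also have "pi * (m powr (\<sigma> - 1) + 192 * m powr (\<sigma> - 1)) = 193 * pi * m powr (\<sigma> - 1)"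
    by simp
  finally have "sqrt ((H_norm \<sigma> (test_function k))^2) \<le> sqrt (193 * pi * m powr (\<sigma> - 1))"
    by (rule real_sqrt_le_mono)
  also have "\<dots> = sqrt (193 * pi) * m powr ((\<sigma> - 1) / 2)"
    using m by (simp only: real_sqrt_mult powr_half_sqrt_powr[OF less_imp_le[OF m]])
  finally show "H_norm \<sigma> (test_function k) \<le> sqrt (193 * pi) * (real k + 2) powr ((\<sigma> - 1) / 2)"
    unfolding m_def real_sqrt_abs by linarith
qed

lemma Lp_norm_test_function_ge:
  assumes "1 \<le> p"
  shows "(pi / (2 * p)) powr (1 / p) * (real k + 2) powr (- (1 / p))
    \<le> (LINT x:Theta|lborel. cmod (test_function k x) powr p) powr (1 / p)"
proof -
  define m where "m = real k + 2"
  have m: "2 \<le> m" by (simp add: m_def)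
  have "1 \<le> m * p" using mult_mono[of 1 m 1 p] m assms by simp
  then have "pi / (2 * p) / m \<le> pi / (m * p + 1)"
    by (simp add: field_simps)
  then have "(pi / (2 * p) / m) powr (1 / p) \<le> (pi / (m * p + 1)) powr (1 / p)"
    using m assms by (intro powr_mono2) simp_all
  moreover have "(pi / (2 * p) / m) powr (1 / p) = (pi / (2 * p)) powr (1 / p) * m powr (- (1 / p))"
    using m assms by (simp add: powr_divide powr_minus_divide powr_mult)
  moreover have "pi / (m * p + 1) = (LINT x:Theta|lborel. cmod (test_function k x) powr p)"
    using integral_test_function_powr[of p k] assms by (simp add: m_def)
  ultimately show ?thesis by (simp add: m_def)
qed

section \<open>Failure of the embedding\<close>

lemma sobolev_inequality_test_function_bound:
  fixes \<sigma> p C :: real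
  assumes "0 \<le> \<sigma>" "\<sigma> \<le> 2" "1 \<le> p" "0 \<le> C"
    and sobolev: "\<And>u. u \<in> H_rad \<sigma> \<Longrightarrow>
      (LINT x:Theta|lborel. cmod (u x) powr p) powr (1 / p) \<le> C * H_norm \<sigma> u"
  shows "(pi / (2 * p)) powr (1 / p) \<le> C * sqrt (193 * pi) * (real k + 2) powr ((\<sigma> - 1) / 2 + 1 / p)"
proof -
  define m where "m = real k + 2"
  have m: "0 < m" by (simp add: m_def)
  note H = H_norm_test_function[OF assms(1,2), of k]
  define c where "c = (pi / (2 * p)) powr (1 / p)"
  have "c * m powr (- (1 / p)) \<le> C * H_norm \<sigma> (test_function k)"
    using Lp_norm_test_function_ge[OF assms(3), of k] sobolev[OF H(1)] by (simp add: c_def m_def)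
  also have "\<dots> \<le> C * (sqrt (193 * pi) * m powr ((\<sigma> - 1) / 2))"
    using H(2) assms(4) by (intro mult_left_mono) (simp_all add: m_def)
  finally have le: "c * m powr (- (1 / p)) \<le> C * (sqrt (193 * pi) * m powr ((\<sigma> - 1) / 2))" .
  have "c = c * (m powr (- (1 / p)) * m powr (1 / p))"
    using m by (simp flip: powr_add)
  also have "\<dots> = (c * m powr (- (1 / p))) * m powr (1 / p)"
    by (simp only: mult.assoc)
  also have "\<dots> \<le> C * (sqrt (193 * pi) * m powr ((\<sigma> - 1) / 2)) * m powr (1 / p)"
    by (rule mult_right_mono[OF le]) simp
  also have "\<dots> = C * sqrt (193 * pi) * (m powr ((\<sigma> - 1) / 2) * m powr (1 / p))"
    by (simp only: mult.assoc)
  also have "\<dots> = C * sqrt (193 * pi) * m powr ((\<sigma> - 1) / 2 + 1 / p)"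
    by (simp flip: powr_add)
  finally show ?thesis unfolding c_def m_def .
qed

theorem H_rad_not_embedded_in_Lp:
  fixes p \<sigma> C :: real
  assumes p: "1 \<le> p" and \<sigma>: "0 \<le> \<sigma>" "\<sigma> < 1 - 2 / p" and C: "0 \<le> C"
    and sobolev: "\<And>u. u \<in> H_rad \<sigma> \<Longrightarrow>
      (LINT x:Theta|lborel. cmod (u x) powr p) powr (1 / p) \<le> C * H_norm \<sigma> u"
  shows False
proof -
  define e where "e = (\<sigma> - 1) / 2 + 1 / p"
  have "e < 0"
    using p \<sigma> by (simp add: e_def field_simps)
  have "filterlim (\<lambda>k. real k + 2) at_top sequentially"
    using filterlim_tendsto_add_at_top[OF tendsto_const[of 2] filterlim_real_sequentially]
    by (simp add: add.commute)
  then have "(\<lambda>k. C * sqrt (193 * pi) * (real k + 2) powr e) \<longlonglongrightarrow> 0"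
    by (intro tendsto_mult_right_zero tendsto_neg_powr[OF \<open>e < 0\<close>])
  moreover have "\<sigma> \<le> 2"
    using p \<sigma> by (smt (verit) divide_nonneg_nonneg)
  then have "(pi / (2 * p)) powr (1 / p) \<le> C * sqrt (193 * pi) * (real k + 2) powr e" for k
    unfolding e_def using \<sigma> p C sobolev by (intro sobolev_inequality_test_function_bound) simp_all
  ultimately have "(pi / (2 * p)) powr (1 / p) \<le> 0"
    by (intro LIMSEQ_le_const) auto
  then show False using p by simp
qed

theorem mainTheorem5:
  fixes \<alpha> :: real
  assumes "\<alpha> \<ge> 2"
  shows "\<not> (\<exists>\<sigma> C. 0 \<le> \<sigma> \<and> \<sigma> < 1/2 \<and> C > 0 \<and>
            (\<forall>u \<in> H_rad \<sigma>.
               set_integrable lborel Theta (\<lambda>x. cmod (u x) powr (\<alpha> + 2)) \<and>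
               (LINT x:Theta|lborel. cmod (u x) powr (\<alpha> + 2)) powr (1 / (\<alpha> + 2))
                 \<le> C * H_norm \<sigma> u))"
proof
  assume "\<exists>\<sigma> C. 0 \<le> \<sigma> \<and> \<sigma> < 1/2 \<and> C > 0 \<and>
            (\<forall>u \<in> H_rad \<sigma>.
               set_integrable lborel Theta (\<lambda>x. cmod (u x) powr (\<alpha> + 2)) \<and>
               (LINT x:Theta|lborel. cmod (u x) powr (\<alpha> + 2)) powr (1 / (\<alpha> + 2))
                 \<le> C * H_norm \<sigma> u)"
  then obtain \<sigma> C where \<sigma>: "0 \<le> \<sigma>" "\<sigma> < 1/2" and C: "0 < C"
    and sobolev: "\<And>u. u \<in> H_rad \<sigma> \<Longrightarrow>
      (LINT x:Theta|lborel. cmod (u x) powr (\<alpha> + 2)) powr (1 / (\<alpha> + 2)) \<le> C * H_norm \<sigma> u"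
    by blast
  have "1 / 2 \<le> 1 - 2 / (\<alpha> + 2)"
    using assms by (simp add: field_simps)
  then have "\<sigma> < 1 - 2 / (\<alpha> + 2)"
    using \<sigma>(2) by linarith
  from H_rad_not_embedded_in_Lp[OF _ \<sigma>(1) this _ sobolev] show False
    using assms C by simp
qed

end
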